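(* Let $I=\Delta[\Delta,\Delta]\Delta$. Each of the following subspaces $U$ is a subalgebra of $\Delta$ containing $I$, and the listed elements form a basis for a complement of $I$ in $U$ (i.e. a basis of a subspace $U'$ with $U=U'+I$ a direct sum): $U=\Delta$: $A^iB^jC^k$ ($i,j,k\geq0$); $U=\langle A,B\rangle$: $A^iB^j$ ($i,j\geq0$); $U=\langle B,C\rangle$: $B^jC^k$ ($j,k\geq0$); $U=\langle A,C\rangle$: $A^iC^k$ ($i,k\geq0$); $U=\langle A,B\rangle\cap\langle A,C\rangle$: $A^i$ ($i\geq0$); $U=\langle A,B\rangle\cap\langle B,C\rangle$: $B^j$ ($j\geq0$); $U=\langle A,C\rangle\cap\langle B,C\rangle$: $C^k$ ($k\geq0$); $U=\langle A,B\rangle\cap\langle B,C\rangle\cap\langle A,C\rangle$: $1$.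
   Context: Let $\mathbb F$ be a field and fix a nonzero $q\in\mathbb F$ with $q^4\neq 1$. The universal Askey--Wilson algebra $\Delta$ is the associative $\mathbb F$-algebra with 1 with generators $A,B,C$ subject to the relations that each of $A+\frac{qBC-q^{-1}CB}{q^2-q^{-2}}$, $B+\frac{qCA-q^{-1}AC}{q^2-q^{-2}}$, $C+\frac{qAB-q^{-1}BA}{q^2-q^{-2}}$ is central. $[\Delta,\Delta]={\rm Span}\{uv-vu:u,v\in\Delta\}$ and $\Delta[\Delta,\Delta]\Delta$ is the 2-sided ideal generated by it. For $\mathcal S\subseteq\Delta$, $\langle\mathcal S\rangle$ denotes the $\mathbb F$-subalgebra of $\Delta$ generated by $\mathcal S$. *)

theory Defs
  imports "HOL-Library.Poly_Mapping"
begin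

datatype gen = GA | GB | GC

datatype fword = FW "gen list"

instantiation fword :: monoid_add
begin
fun plus_fword :: "fword \<Rightarrow> fword \<Rightarrow> fword" where
  "plus_fword (FW a) (FW b) = FW (a @ b)"
definition zero_fword :: fword where "zero_fword = FW []"
instance
proof
  fix a b c :: fword
  show "a + b + c = a + (b + c)" by (cases a; cases b; cases c) simp
  show "0 + a = a" by (cases a) (simp add: zero_fword_def)
  show "a + 0 = a" by (cases a) (simp add: zero_fword_def)
qed
end

type_synonym 'k free_alg = "fword \<Rightarrow>\<^sub>0 'k"

definition sc :: "'k::field \<Rightarrow> 'k free_alg \<Rightarrow> 'k free_alg" where
  "sc c x = Poly_Mapping.single 0 c * x"

definition gA :: "'k::field free_alg" where "gA = Poly_Mapping.single (FW [GA]) 1"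
definition gB :: "'k::field free_alg" where "gB = Poly_Mapping.single (FW [GB]) 1"
definition gC :: "'k::field free_alg" where "gC = Poly_Mapping.single (FW [GC]) 1"

inductive_set ideal_gen :: "'k::field free_alg set \<Rightarrow> 'k free_alg set" for S where
  zero: "0 \<in> ideal_gen S"
| gen: "s \<in> S \<Longrightarrow> a * s * b \<in> ideal_gen S"
| add: "x \<in> ideal_gen S \<Longrightarrow> y \<in> ideal_gen S \<Longrightarrow> x + y \<in> ideal_gen S"

inductive_set subalg_gen :: "'k::field free_alg set \<Rightarrow> 'k free_alg set" for S where
  gen: "s \<in> S \<Longrightarrow> s \<in> subalg_gen S"
| one: "1 \<in> subalg_gen S"
| scal: "x \<in> subalg_gen S \<Longrightarrow> sc c x \<in> subalg_gen S"
| add: "x \<in> subalg_gen S \<Longrightarrow> y \<in> subalg_gen S \<Longrightarrow> x + y \<in> subalg_gen S"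
| mult: "x \<in> subalg_gen S \<Longrightarrow> y \<in> subalg_gen S \<Longrightarrow> x * y \<in> subalg_gen S"

definition is_subalg :: "'k::field free_alg set \<Rightarrow> bool" where
  "is_subalg U \<longleftrightarrow> 1 \<in> U \<and> (\<forall>x\<in>U. \<forall>y\<in>U. x + y \<in> U \<and> x * y \<in> U)
                    \<and> (\<forall>c. \<forall>x\<in>U. sc c x \<in> U)"

definition lin_comb :: "('i \<Rightarrow> 'k::field free_alg) \<Rightarrow> 'i set \<Rightarrow> ('i \<Rightarrow> 'k) \<Rightarrow> 'k free_alg" where
  "lin_comb b F c = (\<Sum>t\<in>F. sc (c t) (b t))"

text \<open>The three elements required to be central.\<close>
definition awA :: "'k::field \<Rightarrow> 'k free_alg" where
  "awA q = gA + sc (inverse (q^2 - inverse q ^ 2)) (sc q (gB * gC) - sc (inverse q) (gC * gB))"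
definition awB :: "'k::field \<Rightarrow> 'k free_alg" where
  "awB q = gB + sc (inverse (q^2 - inverse q ^ 2)) (sc q (gC * gA) - sc (inverse q) (gA * gC))"
definition awC :: "'k::field \<Rightarrow> 'k free_alg" where
  "awC q = gC + sc (inverse (q^2 - inverse q ^ 2)) (sc q (gA * gB) - sc (inverse q) (gB * gA))"

text \<open>Defining ideal \<open>J\<close> of \<open>\<Delta>\<close>: \<open>\<Delta> = free_alg / J\<close>.\<close>
definition AW_ideal :: "'k::field \<Rightarrow> 'k free_alg set" where
  "AW_ideal q = ideal_gen {z * x - x * z | z x. z \<in> {awA q, awB q, awC q}}"

text \<open>Preimage in the free algebra of \<open>I = \<Delta>[\<Delta>,\<Delta>]\<Delta>\<close>.\<close>
definition comm_ideal_lift :: "'k::field \<Rightarrow> 'k free_alg set" where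
  "comm_ideal_lift q = ideal_gen ({x * y - y * x | x y. True} \<union> AW_ideal q)"

text \<open>Preimage in the free algebra of the subalgebra \<open>\<langle>S\<rangle>\<close> of \<open>\<Delta>\<close>
  generated by the images of the elements of \<open>S\<close>.\<close>
definition gen_lift :: "'k::field \<Rightarrow> 'k free_alg set \<Rightarrow> 'k free_alg set" where
  "gen_lift q S = {u + j | u j. u \<in> subalg_gen S \<and> j \<in> AW_ideal q}"

text \<open>For preimages \<open>I \<subseteq> U\<close>: the images of \<open>b t\<close> (\<open>t \<in> T\<close>) in \<open>\<Delta>\<close>
  form a basis of a subspace \<open>U'\<close> of \<open>U/J\<close> with \<open>U/J = U' \<oplus> I/J\<close>.\<close>
definition complement_basis ::
  "'k::field free_alg set \<Rightarrow> 'k free_alg set \<Rightarrow> 'i set \<Rightarrow> ('i \<Rightarrow> 'k free_alg) \<Rightarrow> bool" where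
  "complement_basis I U T b \<longleftrightarrow>
     (\<forall>t\<in>T. b t \<in> U) \<and>
     (\<forall>u\<in>U. \<exists>F c y. finite F \<and> F \<subseteq> T \<and> y \<in> I \<and> u = lin_comb b F c + y) \<and>
     (\<forall>F c. finite F \<and> F \<subseteq> T \<and> lin_comb b F c \<in> I \<longrightarrow> (\<forall>t\<in>F. c t = 0))"

end

theory Submission
  imports Defs "HOL-Library.Product_Plus"
begin

text \<open>First, abelianization maps the free algebra onto the commutative
  polynomial ring \<open>k[a, b, c]\<close> and kills the preimage of \<open>I\<close>; since every word is congruent
  modulo \<open>I\<close> to the ordered monomial with the same letter counts, its kernel is exactly \<open>I\<close>,
  so the ordered monomials are independent modulo \<open>I\<close> and span everything. Inside \<open>\<langle>A, B\<rangle>\<close>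
  (and similarly the other subalgebras) only exponents with \<open>k = 0\<close> occur.

  Second, \<open>I \<subseteq> \<langle>A, B\<rangle>\<close>: modulo the defining relations \<open>C = \<gamma> - (\<dots> \<in> \<langle>A, B\<rangle>)\<close> with \<open>\<gamma>\<close>
  central, and the centrality of \<open>\<alpha>\<close> rewrites \<open>\<gamma> [A, B]\<close> as a multiple of a commutator in
  \<open>\<langle>A, B\<rangle>\<close>. Hence the ideal of \<open>\<langle>A, B\<rangle>\<close> generated by \<open>[A, B]\<close> is stable under \<open>A, B, C\<close>, so it
  is a two-sided ideal of \<open>\<Delta>\<close>; it contains all commutators of generators, hence contains \<open>I\<close>.\<close>

lemma poly_mapping_sum_single:
  "(x :: 'a::monoid_add \<Rightarrow>\<^sub>0 'b::semiring_0) = (\<Sum>w\<in>Poly_Mapping.keys x. Poly_Mapping.single w (Poly_Mapping.lookup x w))"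
proof (rule poly_mapping_eqI)
  fix k
  show "Poly_Mapping.lookup x k = Poly_Mapping.lookup (\<Sum>w\<in>Poly_Mapping.keys x. Poly_Mapping.single w (Poly_Mapping.lookup x w)) k"
    by (cases "k \<in> Poly_Mapping.keys x") (simp_all add: Poly_Mapping.lookup_sum lookup_single when_def in_keys_iff)
qed

lemma keys_single_zero_mult:
  "Poly_Mapping.keys (Poly_Mapping.single (0::'a::monoid_add) c * (p :: 'a \<Rightarrow>\<^sub>0 'b::semiring_0))
    \<subseteq> Poly_Mapping.keys p"
  using keys_mult[of "Poly_Mapping.single 0 c" p] by (auto split: if_splits)

lemma single_zero_mult_commute:
  "(x :: 'k::field free_alg) * Poly_Mapping.single 0 c = Poly_Mapping.single 0 c * x"
proof -
  have "x * Poly_Mapping.single 0 c = (\<Sum>w\<in>Poly_Mapping.keys x. Poly_Mapping.single w (Poly_Mapping.lookup x w) * Poly_Mapping.single 0 c)"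
    by (subst poly_mapping_sum_single) (simp add: sum_distrib_right)
  also have "\<dots> = (\<Sum>w\<in>Poly_Mapping.keys x. Poly_Mapping.single 0 c * Poly_Mapping.single w (Poly_Mapping.lookup x w))"
    by (simp add: mult_single mult.commute)
  also have "\<dots> = Poly_Mapping.single 0 c * x"
    by (subst (2) poly_mapping_sum_single) (simp add: sum_distrib_left)
  finally show ?thesis .
qed

lemma sc_add [simp]: "sc c (x + y) = sc c x + sc c y" by (simp add: sc_def distrib_left)
lemma sc_diff [simp]: "sc c (x - y) = sc c x - sc c y" by (simp add: sc_def right_diff_distrib)
lemma sc_mult_left [simp]: "sc c x * y = sc c (x * y)" by (simp add: sc_def mult.assoc)
lemma sc_mult_right [simp]: "x * sc c y = sc c (x * y)"
  by (simp add: sc_def mult.assoc[symmetric] single_zero_mult_commute)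
lemma sc_sc [simp]: "sc c (sc d x) = sc (c * d) x" by (simp add: sc_def mult.assoc[symmetric] mult_single)
lemma sc_one [simp]: "sc 1 x = x" by (simp add: sc_def)
lemma sc_zero [simp]: "sc 0 x = 0" by (simp add: sc_def)
lemma sc_add_scalar: "sc (c + d) x = sc c x + sc d x" by (simp add: sc_def single_add distrib_right)
lemma sc_diff_scalar: "sc (c - d) x = sc c x - sc d x" by (simp add: sc_def single_diff left_diff_distrib)
lemma sc_minus_scalar: "sc (- c) x = - sc c x" by (simp add: sc_def single_uminus)
lemma sc_single: "sc c (Poly_Mapping.single w 1) = Poly_Mapping.single w c"
  by (simp add: sc_def mult_single)

locale two_sided_ideal =
  fixes J :: "'k::field free_alg set"
  assumes zero [simp, intro]: "0 \<in> J"
    and add [intro]: "x \<in> J \<Longrightarrow> y \<in> J \<Longrightarrow> x + y \<in> J"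
    and mult_left [intro]: "x \<in> J \<Longrightarrow> a * x \<in> J"
    and mult_right [intro]: "x \<in> J \<Longrightarrow> x * a \<in> J"
begin

lemma minus [intro]: "x \<in> J \<Longrightarrow> - x \<in> J"
  using mult_left[of x "-1"] by simp

lemma diff [intro]: "x \<in> J \<Longrightarrow> y \<in> J \<Longrightarrow> x - y \<in> J"
  using add[of x "- y"] by auto

lemma sc [intro]: "x \<in> J \<Longrightarrow> sc c x \<in> J"
  unfolding sc_def by (rule mult_left)

lemma sum [intro]: "(\<And>i. i \<in> A \<Longrightarrow> f i \<in> J) \<Longrightarrow> (\<Sum>i\<in>A. f i) \<in> J"
  by (induction A rule: infinite_finite_induct) auto

end

lemma two_sided_ideal_ideal_gen: "two_sided_ideal (ideal_gen R)"
proof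
  fix x a assume x: "x \<in> ideal_gen R"
  show "a * x \<in> ideal_gen R" using x
  proof induction
    case (gen s a' b) show ?case using ideal_gen.gen[OF gen, of "a * a'" b] by (simp add: mult.assoc)
  qed (auto simp: distrib_left intro: ideal_gen.intros)
  show "x * a \<in> ideal_gen R" using x
  proof induction
    case (gen s a' b) show ?case using ideal_gen.gen[OF gen, of a' "b * a"] by (simp add: mult.assoc)
  qed (auto simp: distrib_right intro: ideal_gen.intros)
qed (auto intro: ideal_gen.intros)

lemma ideal_gen_base: "s \<in> R \<Longrightarrow> s \<in> ideal_gen R"
  using ideal_gen.gen[of s R 1 1] by simp

lemma is_subalg_subalg_gen: "is_subalg (subalg_gen S)"
  unfolding is_subalg_def by (auto intro: subalg_gen.intros)

lemma subalg_gen_zero: "0 \<in> subalg_gen S"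
  using subalg_gen.scal[OF subalg_gen.one[of S], of 0] by simp

lemma subalg_gen_diff: "x \<in> subalg_gen S \<Longrightarrow> y \<in> subalg_gen S \<Longrightarrow> x - y \<in> subalg_gen S"
proof -
  assume "x \<in> subalg_gen S" "y \<in> subalg_gen S"
  then have "x + sc (- 1) y \<in> subalg_gen S" by (intro subalg_gen.add subalg_gen.scal)
  then show ?thesis by (simp add: sc_minus_scalar)
qed

lemma subalg_gen_power: "x \<in> subalg_gen S \<Longrightarrow> x ^ n \<in> subalg_gen S"
  by (induction n) (auto intro: subalg_gen.intros)

lemma subalg_gen_sum: "(\<And>i. i \<in> A \<Longrightarrow> f i \<in> subalg_gen S) \<Longrightarrow> (\<Sum>i\<in>A. f i) \<in> subalg_gen S"
  by (induction A rule: infinite_finite_induct) (auto intro: subalg_gen.add subalg_gen_zero)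

definition is_subspace :: "'k::field free_alg set \<Rightarrow> bool" where
  "is_subspace W \<longleftrightarrow> 0 \<in> W \<and> (\<forall>x\<in>W. \<forall>y\<in>W. x + y \<in> W) \<and> (\<forall>c. \<forall>x\<in>W. sc c x \<in> W)"

context
  fixes W :: "'k::field free_alg set"
  assumes W: "is_subspace W"
begin

lemma subspace_zero: "0 \<in> W"
  and subspace_add: "x \<in> W \<Longrightarrow> y \<in> W \<Longrightarrow> x + y \<in> W"
  and subspace_sc: "x \<in> W \<Longrightarrow> sc c x \<in> W"
  using W unfolding is_subspace_def by blast+

lemma subspace_minus: "x \<in> W \<Longrightarrow> - x \<in> W"
  using subspace_sc[of x "- 1"] by (simp add: sc_minus_scalar)

lemma subspace_diff: "x \<in> W \<Longrightarrow> y \<in> W \<Longrightarrow> x - y \<in> W"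
  using subspace_add[of x "- y"] subspace_minus by simp

lemma subalg_gen_mult_left_closed:
  assumes "\<And>g z. g \<in> T \<Longrightarrow> z \<in> W \<Longrightarrow> g * z \<in> W" and "a \<in> subalg_gen T" and "z \<in> W"
  shows "a * z \<in> W"
  using assms(2,3)
  by (induction arbitrary: z) (auto simp: distrib_right mult.assoc intro: assms(1) subspace_add subspace_sc)

lemma subalg_gen_mult_right_closed:
  assumes "\<And>g z. g \<in> T \<Longrightarrow> z \<in> W \<Longrightarrow> z * g \<in> W" and "a \<in> subalg_gen T" and "z \<in> W"
  shows "z * a \<in> W"
  using assms(2,3)
  by (induction arbitrary: z) (auto simp: distrib_left mult.assoc[symmetric] intro: assms(1) subspace_add subspace_sc)

lemma subalg_gen_commutator_closed:
  assumes left: "\<And>a z. a \<in> subalg_gen T \<Longrightarrow> z \<in> W \<Longrightarrow> a * z \<in> W"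
    and right: "\<And>a z. a \<in> subalg_gen T \<Longrightarrow> z \<in> W \<Longrightarrow> z * a \<in> W"
    and gens: "\<And>g h. g \<in> T \<Longrightarrow> h \<in> T \<Longrightarrow> g * h - h * g \<in> W"
    and x: "x \<in> subalg_gen T" and y: "y \<in> subalg_gen T"
  shows "x * y - y * x \<in> W"
proof -
  have step: "(x1 + x2) * y - y * (x1 + x2) = (x1 * y - y * x1) + (x2 * y - y * x2)"
    "x1 * x2 * y - y * (x1 * x2) = x1 * (x2 * y - y * x2) + (x1 * y - y * x1) * x2"
    for x1 x2 y :: "'k free_alg"
    by (simp_all add: algebra_simps)
  have "g * y - y * g \<in> W" if "g \<in> T" for g
    using y
  proof induction
    case (gen h) then show ?case using gens \<open>g \<in> T\<close> by blast
  next
    case (add y1 y2)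
    have "g * (y1 + y2) - (y1 + y2) * g = (g * y1 - y1 * g) + (g * y2 - y2 * g)"
      by (simp add: algebra_simps)
    then show ?case using add subspace_add by simp
  next
    case (mult y1 y2)
    have "g * (y1 * y2) - y1 * y2 * g = (g * y1 - y1 * g) * y2 + y1 * (g * y2 - y2 * g)"
      by (simp add: algebra_simps)
    then show ?case using mult left right subspace_add by simp
  next
    case (scal y1 c) then show ?case using subspace_sc[OF scal.IH] by simp
  qed (simp add: subspace_zero)
  with x show ?thesis
  proof induction
    case (scal x1 c) then show ?case using subspace_sc[OF scal.IH] by simp
  qed (auto simp: step subspace_zero intro: subspace_add left right)
qed

end

inductive_set ideal_span :: "'k::field free_alg set \<Rightarrow> 'k free_alg set \<Rightarrow> 'k free_alg \<Rightarrow> 'k free_alg set"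
  for S J c where
  ideal: "j \<in> J \<Longrightarrow> j \<in> ideal_span S J c"
| sandwich: "s \<in> S \<Longrightarrow> s' \<in> S \<Longrightarrow> s * c * s' \<in> ideal_span S J c"
| add: "x \<in> ideal_span S J c \<Longrightarrow> y \<in> ideal_span S J c \<Longrightarrow> x + y \<in> ideal_span S J c"

lemma ideal_span_ideal_coset: "x \<in> ideal_span S J c \<Longrightarrow> y - x \<in> J \<Longrightarrow> y \<in> ideal_span S J c"
  using ideal_span.add[OF _ ideal_span.ideal, of x S J c "y - x"] by simp

context two_sided_ideal
begin

context
  fixes S :: "'k free_alg set" and c :: "'k free_alg"
  assumes S: "is_subalg S"
begin

lemma ideal_span_mult_left:
  assumes "s \<in> S" and "z \<in> ideal_span S J c"
  shows "s * z \<in> ideal_span S J c"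
  using assms(2)
proof induction
  case (sandwich a b)
  have "(s * a) * c * b \<in> ideal_span S J c"
    using S sandwich \<open>s \<in> S\<close> unfolding is_subalg_def by (blast intro: ideal_span.sandwich)
  then show ?case by (simp add: mult.assoc)
qed (auto simp: distrib_left intro: ideal_span.intros)

lemma ideal_span_mult_right:
  assumes "s \<in> S" and "z \<in> ideal_span S J c"
  shows "z * s \<in> ideal_span S J c"
  using assms(2)
proof induction
  case (sandwich a b)
  have "a * c * (b * s) \<in> ideal_span S J c"
    using S sandwich \<open>s \<in> S\<close> unfolding is_subalg_def by (blast intro: ideal_span.sandwich)
  then show ?case by (simp add: mult.assoc)
qed (auto simp: distrib_right intro: ideal_span.intros)

lemma is_subspace_ideal_span: "is_subspace (ideal_span S J c)"
proof -
  have "sc a z \<in> ideal_span S J c" if "z \<in> ideal_span S J c" for a z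
  proof -
    have "sc a 1 \<in> S" using S unfolding is_subalg_def by blast
    then show ?thesis using ideal_span_mult_left[of "sc a 1" z] that by simp
  qed
  then show ?thesis unfolding is_subspace_def by (blast intro: ideal_span.intros)
qed

lemma ideal_span_generator: "c \<in> ideal_span S J c"
  using S ideal_span.sandwich[of 1 S 1 c J] unfolding is_subalg_def by simp

lemma ideal_span_subset_coset:
  assumes "c \<in> S" and "z \<in> ideal_span S J c"
  shows "z \<in> {u + j |u j. u \<in> S \<and> j \<in> J}"
  using assms(2)
proof induction
  case (ideal j)
  have "0 \<in> S" using S sc_zero unfolding is_subalg_def by metis
  with ideal show ?case by force
next
  case (sandwich s s')
  then have "s * c * s' \<in> S" using S \<open>c \<in> S\<close> unfolding is_subalg_def by blast
  then show ?case by force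
next
  case (add x y)
  then obtain u j u' j' where "x = u + j" "y = u' + j'" "u \<in> S" "u' \<in> S" "j \<in> J" "j' \<in> J"
    by blast
  moreover from this have "x + y = (u + u') + (j + j')" by (simp add: add_ac)
  ultimately show ?case using S unfolding is_subalg_def by blast
qed

end

lemma commutator_in_ideal_span:
  assumes "x \<in> subalg_gen {X, Y}" and "y \<in> subalg_gen {X, Y}"
  shows "x * y - y * x \<in> ideal_span (subalg_gen {X, Y}) J (X * Y - Y * X)"
proof (rule subalg_gen_commutator_closed[OF is_subspace_ideal_span[OF is_subalg_subalg_gen] _ _ _ assms])
  let ?W = "ideal_span (subalg_gen {X, Y}) J (X * Y - Y * X)"
  have "X * Y - Y * X \<in> ?W" by (rule ideal_span_generator[OF is_subalg_subalg_gen])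
  then have "Y * X - X * Y \<in> ?W"
    using subspace_minus[OF is_subspace_ideal_span[OF is_subalg_subalg_gen]] by fastforce
  with \<open>X * Y - Y * X \<in> ?W\<close> show "g * h - h * g \<in> ?W" if "g \<in> {X, Y}" "h \<in> {X, Y}" for g h
    using that by (auto intro: ideal_span.ideal)
qed (auto intro: ideal_span_mult_left ideal_span_mult_right is_subalg_subalg_gen)

end

subsection \<open>The commutator ideal lies in a two-generated subalgebra\<close>

text \<open>A pair of generators \<open>X, Y\<close> of \<open>\<Delta>\<close>, with \<open>J\<close> the defining ideal: the third generator \<open>Z\<close>
  differs from the central element \<open>G\<close> by an element of \<open>\<langle>X, Y\<rangle>\<close>, and \<open>G'\<close> is the central
  element attached to \<open>X\<close>.\<close>

locale aw_reduction = two_sided_ideal J for J :: "'k::field free_alg set" +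
  fixes X Y Z G G' :: "'k free_alg" and e q q' :: 'k
  assumes Z_eq: "Z = G - sc e (sc q (X * Y) - sc q' (Y * X))"
    and G'_eq: "G' = X + sc e (sc q (Y * Z) - sc q' (Z * Y))"
    and central: "G * w - w * G \<in> J" and central': "G' * w - w * G' \<in> J"
    and e_nonzero: "e \<noteq> 0" and q_neq: "q \<noteq> q'"
    and generated: "w \<in> subalg_gen {X, Y, Z}"
begin

abbreviation (input) S where "S \<equiv> subalg_gen {X, Y}"
abbreviation (input) W where "W \<equiv> ideal_span S J (X * Y - Y * X)"
abbreviation (input) P where "P \<equiv> sc e (sc q (X * Y) - sc q' (Y * X))"

lemma W_subspace: "is_subspace W"
  by (rule is_subspace_ideal_span[OF is_subalg_subalg_gen])

lemma W_mult_left_S: "s \<in> S \<Longrightarrow> z \<in> W \<Longrightarrow> s * z \<in> W"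
  and W_mult_right_S: "s \<in> S \<Longrightarrow> z \<in> W \<Longrightarrow> z * s \<in> W"
  by (auto intro: ideal_span_mult_left ideal_span_mult_right is_subalg_subalg_gen)

lemma X_in_S: "X \<in> S" and Y_in_S: "Y \<in> S"
  by (auto intro: subalg_gen.gen)

lemma P_in_S: "P \<in> S"
  by (intro subalg_gen.scal subalg_gen_diff subalg_gen.mult) (auto intro: subalg_gen.gen)

lemma G_mult_commutator: "\<exists>v \<in> W. G * (X * Y - Y * X) - v \<in> J"
proof -
  define X' where "X' = sc q (Y * P) - sc q' (P * Y)"
  have "X' \<in> S" unfolding X'_def
    by (intro subalg_gen_diff subalg_gen.scal subalg_gen.mult P_in_S) (auto intro: subalg_gen.gen)
  define D where "D = sc e (sc q ((Y * G - G * Y) * X) - sc q ((X * Y) * G - G * (X * Y)) + sc q' ((X * G - G * X) * Y))"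
  have swap: "w * G - G * w \<in> J" for w using minus[OF central[of w]] by simp
  have "D \<in> J" unfolding D_def by (intro swap sc add diff mult_right)
  text \<open>Modulo \<open>J\<close>, \<open>G' \<equiv> X + e (q - q') G Y - e X'\<close>, so commuting \<open>G'\<close> with \<open>X\<close> expresses \<open>G [X, Y]\<close>
    through \<open>[X', X]\<close>.\<close>
  have "G' * X - X * G' - D = sc (e * (q - q')) (G * (Y * X - X * Y)) - sc e (X' * X - X * X')"
    unfolding D_def G'_eq Z_eq X'_def by (simp add: algebra_simps sc_add_scalar sc_diff_scalar)
  then have rel: "sc (e * (q - q')) (G * (Y * X - X * Y)) - sc e (X' * X - X * X') \<in> J"
    using diff[OF central'[of X] \<open>D \<in> J\<close>] by simp
  define v where "v = sc (- inverse (q - q')) (X' * X - X * X')"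
  have "v \<in> W" unfolding v_def
    using subspace_sc[OF W_subspace commutator_in_ideal_span[OF \<open>X' \<in> S\<close>]] by (auto intro: subalg_gen.gen)
  moreover have "sc (- inverse (e * (q - q'))) (sc (e * (q - q')) (G * (Y * X - X * Y)) - sc e (X' * X - X * X'))
      = G * (X * Y - Y * X) - v"
  proof -
    have "- inverse (e * (q - q')) * (e * (q - q')) = - 1" "- inverse (e * (q - q')) * e = - inverse (q - q')"
      using e_nonzero q_neq by (simp_all add: field_simps)
    then have "sc (- inverse (e * (q - q'))) (sc (e * (q - q')) (G * (Y * X - X * Y)) - sc e (X' * X - X * X'))
        = sc (- 1) (G * (Y * X - X * Y)) - v"
      unfolding v_def by (simp only: sc_diff sc_sc)
    then show ?thesis by (simp add: sc_minus_scalar algebra_simps)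
  qed
  ultimately show ?thesis using sc[OF rel] by (metis (no_types))
qed

lemma W_mult_G: "z \<in> W \<Longrightarrow> G * z \<in> W"
proof (induction rule: ideal_span.induct)
  case (sandwich s s')
  obtain v where "v \<in> W" and v: "G * (X * Y - Y * X) - v \<in> J"
    using G_mult_commutator by blast
  have "s * v * s' \<in> W" using sandwich \<open>v \<in> W\<close> W_mult_left_S W_mult_right_S by blast
  moreover have "G * (s * (X * Y - Y * X) * s') - s * v * s'
      = (G * s - s * G) * (X * Y - Y * X) * s' + s * (G * (X * Y - Y * X) - v) * s'"
    by (simp add: algebra_simps)
  moreover have "\<dots> \<in> J" using central v by blast
  ultimately show ?case by (metis ideal_span_ideal_coset)
qed (auto simp: distrib_left intro: ideal_span.intros)

lemma W_mult_generator:
  assumes "g \<in> {X, Y, Z}" and "z \<in> W"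
  shows "g * z \<in> W" and "z * g \<in> W"
proof -
  have "Z * z = G * z - P * z" and "z * Z = G * z - (G * z - z * G) - z * P"
    by (simp_all add: Z_eq algebra_simps)
  moreover have "G * z - (G * z - z * G) \<in> W"
    using ideal_span_ideal_coset[OF W_mult_G[OF \<open>z \<in> W\<close>]] minus[OF central] by simp
  ultimately show "g * z \<in> W" and "z * g \<in> W"
    using assms W_mult_G W_mult_left_S W_mult_right_S X_in_S Y_in_S P_in_S subspace_diff[OF W_subspace]
    by auto
qed

lemma W_mult_left: "z \<in> W \<Longrightarrow> a * z \<in> W"
  using subalg_gen_mult_left_closed[OF W_subspace W_mult_generator(1) generated] by blast

lemma W_mult_right: "z \<in> W \<Longrightarrow> z * a \<in> W"
  using subalg_gen_mult_right_closed[OF W_subspace W_mult_generator(2) generated] by blast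

lemma commutator_generators_in_W:
  assumes "g \<in> {X, Y, Z}" and "h \<in> {X, Y, Z}"
  shows "g * h - h * g \<in> W"
proof -
  have Z: "Z * h - h * Z \<in> W" if "h \<in> {X, Y}" for h
  proof (rule ideal_span_ideal_coset)
    show "- (P * h - h * P) \<in> W"
      using that subspace_minus[OF W_subspace commutator_in_ideal_span[OF P_in_S]]
      by (auto intro: subalg_gen.gen)
    show "Z * h - h * Z - - (P * h - h * P) \<in> J"
      using central[of h] by (simp add: Z_eq algebra_simps)
  qed
  then have "h * Z - Z * h \<in> W" if "h \<in> {X, Y}" for h
    using subspace_minus[OF W_subspace Z[OF that]] by simp
  with Z show ?thesis
    using assms commutator_in_ideal_span[OF X_in_S Y_in_S] commutator_in_ideal_span[OF Y_in_S X_in_S]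
      subspace_zero[OF W_subspace]
    by auto
qed

theorem commutator_ideal_in_coset:
  "a * (x * y - y * x) * b \<in> {u + j |u j. u \<in> S \<and> j \<in> J}"
proof (rule ideal_span_subset_coset[OF is_subalg_subalg_gen])
  show "X * Y - Y * X \<in> S" by (intro subalg_gen_diff subalg_gen.mult) (auto intro: subalg_gen.gen)
  have "x * y - y * x \<in> W"
    using subalg_gen_commutator_closed[OF W_subspace _ _ commutator_generators_in_W generated generated]
      W_mult_left W_mult_right by blast
  then show "a * (x * y - y * x) * b \<in> W" using W_mult_left W_mult_right by blast
qed

end

lemma single_word_in_subalg_gen: "Poly_Mapping.single (FW l) c \<in> subalg_gen {gA, gB, gC :: 'k::field free_alg}"
proof (induction l arbitrary: c)
  case Nil
  have "Poly_Mapping.single (FW []) c = sc c (1 :: 'k free_alg)"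
    by (simp add: sc_def zero_fword_def[symmetric])
  then show ?case by (simp add: subalg_gen.scal subalg_gen.one)
next
  case (Cons g l)
  have "Poly_Mapping.single (FW (g # l)) c = Poly_Mapping.single (FW [g]) 1 * (Poly_Mapping.single (FW l) c :: 'k free_alg)"
    by (simp add: mult_single)
  moreover have "Poly_Mapping.single (FW [g]) 1 \<in> subalg_gen {gA, gB, gC :: 'k free_alg}"
    by (cases g) (auto simp: gA_def gB_def gC_def intro: subalg_gen.gen)
  ultimately show ?case using Cons by (simp add: subalg_gen.mult)
qed

lemma subalg_gen_ABC: "(x :: 'k::field free_alg) \<in> subalg_gen {gA, gB, gC}"
  by (subst poly_mapping_sum_single) (intro subalg_gen_sum, metis fword.exhaust single_word_in_subalg_gen)

interpretation AW_ideal: two_sided_ideal "AW_ideal q"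
  unfolding AW_ideal_def by (rule two_sided_ideal_ideal_gen)

interpretation comm_ideal_lift: two_sided_ideal "comm_ideal_lift q"
  unfolding comm_ideal_lift_def by (rule two_sided_ideal_ideal_gen)

lemma AW_ideal_subset_comm_ideal_lift: "x \<in> AW_ideal q \<Longrightarrow> x \<in> comm_ideal_lift q"
  unfolding comm_ideal_lift_def by (rule ideal_gen_base) blast

lemma commutator_in_comm_ideal_lift: "x * y - y * x \<in> comm_ideal_lift q"
  unfolding comm_ideal_lift_def by (rule ideal_gen_base) blast

lemma AW_ideal_central: "z \<in> {awA q, awB q, awC q} \<Longrightarrow> z * w - w * z \<in> AW_ideal q"
  unfolding AW_ideal_def by (rule ideal_gen_base) blast

lemma aw_coefficient_nonzero:
  fixes q :: "'k::field"
  assumes "q \<noteq> 0" and "q ^ 4 \<noteq> 1"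
  shows "inverse (q^2 - inverse q ^ 2) \<noteq> 0" and "q \<noteq> inverse q"
proof -
  have "q ^ 4 = (q^2) * (q^2)" by algebra
  then show "inverse (q^2 - inverse q ^ 2) \<noteq> 0" using assms by (auto simp: field_simps)
  show "q \<noteq> inverse q"
  proof
    assume "q = inverse q"
    then have "q * q = 1" using assms(1) by (simp add: field_simps)
    then have "q ^ 4 = 1" by (metis power2_eq_square power_mult one_power2 numeral_Bit0 mult_2_right)
    with assms(2) show False ..
  qed
qed

lemma comm_ideal_lift_subset_gen_lift:
  fixes q :: "'k::field"
  assumes q: "q \<noteq> 0" "q ^ 4 \<noteq> 1"
    and Z_eq: "Z = G - sc (inverse (q^2 - inverse q ^ 2)) (sc q (X * Y) - sc (inverse q) (Y * X))"
    and G'_eq: "G' = X + sc (inverse (q^2 - inverse q ^ 2)) (sc q (Y * Z) - sc (inverse q) (Z * Y))"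
    and central: "G \<in> {awA q, awB q, awC q}" "G' \<in> {awA q, awB q, awC q}"
    and generators: "{X, Y, Z} = {gA, gB, gC}"
  shows "comm_ideal_lift q \<subseteq> gen_lift q {X, Y}"
proof
  interpret aw_reduction "AW_ideal q" X Y Z G G' "inverse (q^2 - inverse q ^ 2)" q "inverse q"
    using aw_coefficient_nonzero[OF q] Z_eq G'_eq AW_ideal_central[OF central(1)] AW_ideal_central[OF central(2)]
      subalg_gen_ABC generators
    by unfold_locales auto
  fix x assume "x \<in> comm_ideal_lift q"
  then show "x \<in> gen_lift q {X, Y}"
    unfolding comm_ideal_lift_def
  proof induction
    case zero
    then show ?case unfolding gen_lift_def using subalg_gen_zero by force
  next
    case (gen s a b)
    then show ?case
    proof
      assume "s \<in> {x * y - y * x |x y. True}"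
      then show ?thesis unfolding gen_lift_def using commutator_ideal_in_coset by auto
    next
      assume "s \<in> AW_ideal q"
      then show ?thesis unfolding gen_lift_def using subalg_gen_zero by force
    qed
  next
    case (add x y)
    then obtain u j u' j' where "x = u + j" "y = u' + j'" "u \<in> subalg_gen {X, Y}" "u' \<in> subalg_gen {X, Y}"
      "j \<in> AW_ideal q" "j' \<in> AW_ideal q" unfolding gen_lift_def by blast
    moreover from this have "x + y = (u + u') + (j + j')" by (simp add: add_ac)
    ultimately show ?case unfolding gen_lift_def by (blast intro: subalg_gen.add)
  qed
qed

subsection \<open>Abelianization\<close>

definition map_keys :: "('a \<Rightarrow> 'b) \<Rightarrow> ('a \<Rightarrow>\<^sub>0 'c::comm_monoid_add) \<Rightarrow> 'b \<Rightarrow>\<^sub>0 'c" where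
  "map_keys f x = (\<Sum>w\<in>Poly_Mapping.keys x. Poly_Mapping.single (f w) (Poly_Mapping.lookup x w))"

lemma map_keys_superset:
  "finite K \<Longrightarrow> Poly_Mapping.keys x \<subseteq> K \<Longrightarrow>
    map_keys f x = (\<Sum>w\<in>K. Poly_Mapping.single (f w) (Poly_Mapping.lookup x w))"
  unfolding map_keys_def by (rule sum.mono_neutral_left) (auto simp: in_keys_iff)

lemma map_keys_add: "map_keys f (x + y) = map_keys f x + map_keys f y"
proof -
  let ?K = "Poly_Mapping.keys x \<union> Poly_Mapping.keys y \<union> Poly_Mapping.keys (x + y)"
  show ?thesis
    by (subst (1 2 3) map_keys_superset[of ?K]) (auto simp: lookup_add single_add sum.distrib)
qed

lemma map_keys_zero [simp]: "map_keys f 0 = 0"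
  by (simp add: map_keys_def)

lemma map_keys_single [simp]: "map_keys f (Poly_Mapping.single w c) = Poly_Mapping.single (f w) c"
  by (subst map_keys_superset[of "{w}"]) (auto simp: lookup_single)

lemma map_keys_sum: "map_keys f (\<Sum>i\<in>A. x i) = (\<Sum>i\<in>A. map_keys f (x i))"
  by (induction A rule: infinite_finite_induct) (simp_all add: map_keys_add)

lemma map_keys_diff: "map_keys f (x - y) = map_keys f x - map_keys f (y :: _ \<Rightarrow>\<^sub>0 'c::ab_group_add)"
  by (metis add_diff_cancel diff_add_cancel map_keys_add)

context
  fixes f :: "'a::monoid_add \<Rightarrow> 'b::monoid_add"
  assumes f_add: "\<And>a b. f (a + b) = f a + f b"
begin

lemma map_keys_mult: "map_keys f (x * y) = map_keys f x * map_keys f (y :: 'a \<Rightarrow>\<^sub>0 'c::comm_semiring_0)"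
proof -
  have "x * y = (\<Sum>w\<in>Poly_Mapping.keys x. \<Sum>v\<in>Poly_Mapping.keys y.
      Poly_Mapping.single w (Poly_Mapping.lookup x w) * Poly_Mapping.single v (Poly_Mapping.lookup y v))"
    by (subst (1) poly_mapping_sum_single, subst (1) poly_mapping_sum_single[of y])
      (simp add: sum_distrib_left sum_distrib_right sum.swap[of _ "Poly_Mapping.keys y"])
  then have "map_keys f (x * y) = (\<Sum>w\<in>Poly_Mapping.keys x. \<Sum>v\<in>Poly_Mapping.keys y.
      Poly_Mapping.single (f w) (Poly_Mapping.lookup x w) * Poly_Mapping.single (f v) (Poly_Mapping.lookup y v))"
    by (simp add: map_keys_sum mult_single f_add)
  also have "\<dots> = map_keys f x * map_keys f y"
    by (simp add: map_keys_def sum_distrib_left sum_distrib_right) (rule sum.swap)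
  finally show ?thesis .
qed

lemma map_keys_one: "f 0 = 0 \<Longrightarrow> map_keys f 1 = (1 :: 'b \<Rightarrow>\<^sub>0 'c::semiring_1)"
  by (metis map_keys_single single_one)

end

definition letter_count :: "fword \<Rightarrow> nat \<times> nat \<times> nat" where
  "letter_count w = (case w of FW l \<Rightarrow>
     (length (filter ((=) GA) l), length (filter ((=) GB) l), length (filter ((=) GC) l)))"

lemma letter_count_add: "letter_count (a + b) = letter_count a + letter_count b"
  by (cases a; cases b) (simp add: letter_count_def)

lemma letter_count_zero: "letter_count 0 = 0"
  by (simp add: letter_count_def zero_fword_def zero_prod_def)

text \<open>Elements of \<open>k[a, b, c]\<close> are finitely supported maps from exponent triples \<open>(i, j, k)\<close> to
  coefficients.\<close>

definition abelianize :: "'k::field free_alg \<Rightarrow> (nat \<times> nat \<times> nat) \<Rightarrow>\<^sub>0 'k" where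
  "abelianize = map_keys letter_count"

lemma abelianize_zero: "abelianize 0 = 0"
  and abelianize_add: "abelianize (x + y) = abelianize x + abelianize y"
  and abelianize_diff: "abelianize (x - y) = abelianize x - abelianize y"
  and abelianize_sum: "abelianize (\<Sum>i\<in>A. z i) = (\<Sum>i\<in>A. abelianize (z i))"
  and abelianize_single: "abelianize (Poly_Mapping.single w c) = Poly_Mapping.single (letter_count w) c"
  and abelianize_mult: "abelianize (x * y) = abelianize x * abelianize y"
  and abelianize_one: "abelianize 1 = 1"
  unfolding abelianize_def
  by (simp_all add: map_keys_add map_keys_diff map_keys_sum map_keys_mult map_keys_one
      letter_count_add letter_count_zero)

lemma abelianize_power: "abelianize (x ^ n) = abelianize x ^ n"
  by (induction n) (simp_all add: abelianize_one abelianize_mult)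

lemma abelianize_sc: "abelianize (sc c x) = Poly_Mapping.single 0 c * abelianize x"
  unfolding sc_def by (simp add: abelianize_mult abelianize_single letter_count_zero)

lemma abelianize_generators:
  "abelianize gA = Poly_Mapping.single (1, 0, 0) 1"
  "abelianize gB = Poly_Mapping.single (0, 1, 0) 1"
  "abelianize gC = Poly_Mapping.single (0, 0, 1) 1"
  by (simp_all add: gA_def gB_def gC_def abelianize_single letter_count_def)

lemma abelianize_commutator: "abelianize (x * y - y * x) = 0"
  by (simp add: abelianize_diff abelianize_mult mult.commute)

lemma abelianize_ideal_gen:
  "x \<in> ideal_gen R \<Longrightarrow> (\<And>s. s \<in> R \<Longrightarrow> abelianize s = 0) \<Longrightarrow> abelianize x = 0"
  by (induction rule: ideal_gen.induct) (simp_all add: abelianize_zero abelianize_add abelianize_mult)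

lemma abelianize_comm_ideal_lift: "x \<in> comm_ideal_lift q \<Longrightarrow> abelianize x = 0"
  unfolding comm_ideal_lift_def AW_ideal_def
  by (erule abelianize_ideal_gen) (auto simp: abelianize_commutator elim: abelianize_ideal_gen)

subsection \<open>Ordered monomials span \<open>\<Delta>\<close> modulo the commutator ideal\<close>

definition monomial_ABC :: "nat \<times> nat \<times> nat \<Rightarrow> 'k::field free_alg" where
  "monomial_ABC = (\<lambda>(i, j, k). gA ^ i * gB ^ j * gC ^ k)"

lemma single_power:
  "Poly_Mapping.single (a, b, c) (1 :: 'k::semiring_1) ^ n = Poly_Mapping.single (n * a, n * b, n * c) 1"
proof (induction n)
  case 0
  have "(0, 0, 0) = (0 :: nat \<times> nat \<times> nat)" by (simp add: zero_prod_def)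
  then show ?case by simp
qed (simp add: mult_single)

lemma abelianize_monomial_ABC: "abelianize (monomial_ABC t) = Poly_Mapping.single t 1"
  by (cases t) (simp add: monomial_ABC_def abelianize_mult abelianize_power abelianize_generators
      single_power mult_single)

lemma word_congruent_monomial:
  "Poly_Mapping.single (FW l) 1 - monomial_ABC (letter_count (FW l)) \<in> comm_ideal_lift (q :: 'k::field)"
proof (induction l)
  case Nil
  have "Poly_Mapping.single (FW []) (1::'k) = 1" by (simp add: zero_fword_def[symmetric])
  then show ?case by (simp add: monomial_ABC_def letter_count_def)
next
  case (Cons g l)
  obtain i j k where ijk: "letter_count (FW l) = (i, j, k)" by (cases "letter_count (FW l)") auto
  let ?g = "Poly_Mapping.single (FW [g]) (1::'k)"
  have "?g * monomial_ABC (i, j, k) - monomial_ABC (letter_count (FW (g # l))) \<in> comm_ideal_lift q"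
  proof (cases g)
    case GA
    then show ?thesis using ijk by (simp add: monomial_ABC_def letter_count_def gA_def[symmetric] mult.assoc)
  next
    case GB
    then have "?g * monomial_ABC (i, j, k) - monomial_ABC (letter_count (FW (g # l)))
        = (gB * gA ^ i - gA ^ i * gB) * (gB ^ j * gC ^ k)"
      using ijk by (simp add: monomial_ABC_def letter_count_def gB_def[symmetric] algebra_simps)
    then show ?thesis using commutator_in_comm_ideal_lift by auto
  next
    case GC
    then have "?g * monomial_ABC (i, j, k) - monomial_ABC (letter_count (FW (g # l)))
        = (gC * (gA ^ i * gB ^ j) - (gA ^ i * gB ^ j) * gC) * gC ^ k"
      using ijk by (simp add: monomial_ABC_def letter_count_def gC_def[symmetric] algebra_simps)
    then show ?thesis using commutator_in_comm_ideal_lift by auto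
  qed
  moreover have "?g * (Poly_Mapping.single (FW l) 1 - monomial_ABC (i, j, k)) \<in> comm_ideal_lift q"
    using Cons ijk by auto
  moreover have "Poly_Mapping.single (FW (g # l)) 1 = ?g * Poly_Mapping.single (FW l) 1"
    by (simp add: mult_single)
  ultimately show ?case using comm_ideal_lift.add by (fastforce simp: algebra_simps)
qed

definition monomial_combination :: "((nat \<times> nat \<times> nat) \<Rightarrow>\<^sub>0 'k) \<Rightarrow> 'k::field free_alg" where
  "monomial_combination p = lin_comb monomial_ABC (Poly_Mapping.keys p) (Poly_Mapping.lookup p)"

lemma monomial_combination_superset:
  "finite K \<Longrightarrow> Poly_Mapping.keys p \<subseteq> K \<Longrightarrow>
    monomial_combination p = (\<Sum>t\<in>K. sc (Poly_Mapping.lookup p t) (monomial_ABC t))"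
  unfolding monomial_combination_def lin_comb_def by (rule sum.mono_neutral_left) (auto simp: in_keys_iff)

lemma monomial_combination_zero: "monomial_combination 0 = 0"
  by (simp add: monomial_combination_def lin_comb_def)

lemma monomial_combination_add: "monomial_combination (p + p') = monomial_combination p + monomial_combination p'"
proof -
  let ?K = "Poly_Mapping.keys p \<union> Poly_Mapping.keys p' \<union> Poly_Mapping.keys (p + p')"
  show ?thesis
    by (subst (1 2 3) monomial_combination_superset[of ?K]) (auto simp: lookup_add sc_add_scalar sum.distrib)
qed

lemma monomial_combination_sum: "monomial_combination (\<Sum>i\<in>A. p i) = (\<Sum>i\<in>A. monomial_combination (p i))"
  by (induction A rule: infinite_finite_induct)
    (simp_all add: monomial_combination_zero monomial_combination_add)

lemma monomial_combination_single: "monomial_combination (Poly_Mapping.single t c) = sc c (monomial_ABC t)"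
  by (subst monomial_combination_superset[of "{t}"]) (auto simp: lookup_single)

lemma congruent_monomial_combination: "x - monomial_combination (abelianize x) \<in> comm_ideal_lift q"
proof -
  let ?K = "Poly_Mapping.keys x"
  have "monomial_combination (abelianize x) = (\<Sum>w\<in>?K. sc (Poly_Mapping.lookup x w) (monomial_ABC (letter_count w)))"
    unfolding abelianize_def map_keys_def by (simp add: monomial_combination_sum monomial_combination_single)
  moreover have "x = (\<Sum>w\<in>?K. sc (Poly_Mapping.lookup x w) (Poly_Mapping.single w 1))"
    by (subst poly_mapping_sum_single) (simp add: sc_single)
  ultimately have "x - monomial_combination (abelianize x)
      = (\<Sum>w\<in>?K. sc (Poly_Mapping.lookup x w) (Poly_Mapping.single w 1 - monomial_ABC (letter_count w)))"
    by (simp add: sum_subtractf)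
  also have "\<dots> \<in> comm_ideal_lift q"
    by (intro comm_ideal_lift.sum comm_ideal_lift.sc) (metis fword.exhaust word_congruent_monomial)
  finally show ?thesis .
qed

theorem comm_ideal_lift_iff_abelianize: "x \<in> comm_ideal_lift q \<longleftrightarrow> abelianize x = 0"
  using abelianize_comm_ideal_lift congruent_monomial_combination[of x q]
  by (auto simp: monomial_combination_zero)

lemma abelianize_lin_comb:
  "abelianize (lin_comb (monomial_ABC \<circ> emb) F c) = (\<Sum>i\<in>F. Poly_Mapping.single (emb i) (c i))"
  by (simp add: lin_comb_def abelianize_sum abelianize_sc abelianize_monomial_ABC mult_single)

lemma lin_comb_monomials_congruent:
  assumes "inj emb" and "Poly_Mapping.keys (abelianize u) \<subseteq> range emb"
  defines "F \<equiv> emb -` Poly_Mapping.keys (abelianize u)"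
  shows "finite F"
    and "u - lin_comb (monomial_ABC \<circ> emb) F (\<lambda>i. Poly_Mapping.lookup (abelianize u) (emb i)) \<in> comm_ideal_lift q"
proof -
  show "finite F" unfolding F_def using assms(1) by (simp add: finite_vimageI)
  have "emb ` F = Poly_Mapping.keys (abelianize u)" unfolding F_def using assms(2) by blast
  then have "abelianize (lin_comb (monomial_ABC \<circ> emb) F (\<lambda>i. Poly_Mapping.lookup (abelianize u) (emb i)))
      = (\<Sum>t\<in>Poly_Mapping.keys (abelianize u). Poly_Mapping.single t (Poly_Mapping.lookup (abelianize u) t))"
    unfolding abelianize_lin_comb using assms(1) by (metis (no_types, lifting) inj_on_subset subset_UNIV sum.reindex_cong)
  also have "\<dots> = abelianize u" by (rule poly_mapping_sum_single[symmetric])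
  finally show "u - lin_comb (monomial_ABC \<circ> emb) F (\<lambda>i. Poly_Mapping.lookup (abelianize u) (emb i)) \<in> comm_ideal_lift q"
    by (simp add: comm_ideal_lift_iff_abelianize abelianize_diff)
qed

lemma lin_comb_monomials_independent:
  assumes "inj emb" and "finite F" and "lin_comb (monomial_ABC \<circ> emb) F c \<in> comm_ideal_lift q" and "t \<in> F"
  shows "c t = 0"
proof -
  have "(\<Sum>i\<in>F. Poly_Mapping.single (emb i) (c i)) = 0"
    using assms(3) by (simp add: comm_ideal_lift_iff_abelianize abelianize_lin_comb)
  then have "(\<Sum>i\<in>F. Poly_Mapping.lookup (Poly_Mapping.single (emb i) (c i)) (emb t)) = 0"
    by (metis Poly_Mapping.lookup_sum lookup_zero)
  then show "c t = 0" using assms by (simp add: lookup_single when_def inj_eq)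
qed

lemma complement_basis_monomials:
  assumes "inj emb" and b: "\<And>i. b i = monomial_ABC (emb i)" and "\<And>i. b i \<in> U"
    and "\<And>u. u \<in> U \<Longrightarrow> Poly_Mapping.keys (abelianize u) \<subseteq> range emb"
  shows "complement_basis (comm_ideal_lift q) U UNIV b"
proof -
  have "b = monomial_ABC \<circ> emb" using b by auto
  then show ?thesis
    unfolding complement_basis_def
  proof (intro conjI ballI allI impI)
    fix u assume "u \<in> U"
    with lin_comb_monomials_congruent[OF assms(1) assms(4)] \<open>b = monomial_ABC \<circ> emb\<close>
    show "\<exists>F c y. finite F \<and> F \<subseteq> UNIV \<and> y \<in> comm_ideal_lift q \<and> u = lin_comb b F c + y"
      by (metis add.commute diff_add_cancel subset_UNIV)
  qed (use assms lin_comb_monomials_independent in auto)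
qed

lemma keys_abelianize_subalg_gen:
  assumes gens: "\<And>s. s \<in> S \<Longrightarrow> Poly_Mapping.keys (abelianize s) \<subseteq> K"
    and zero: "0 \<in> K" and add: "\<And>a b. a \<in> K \<Longrightarrow> b \<in> K \<Longrightarrow> a + b \<in> K"
    and "u \<in> subalg_gen S"
  shows "Poly_Mapping.keys (abelianize u) \<subseteq> K"
  using \<open>u \<in> subalg_gen S\<close>
proof induction
  case one then show ?case using zero by (simp add: abelianize_one)
next
  case (scal x c)
  then show ?case using keys_single_zero_mult[of c "abelianize x"] by (simp add: abelianize_sc)
next
  case (add x y) then show ?case using keys_add[of "abelianize x" "abelianize y"] by (auto simp: abelianize_add)
next
  case (mult x y) then show ?case using keys_mult[of "abelianize x" "abelianize y"] add by (fastforce simp: abelianize_mult)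
qed (rule gens)

lemma keys_abelianize_gen_lift:
  assumes "\<And>s. s \<in> S \<Longrightarrow> Poly_Mapping.keys (abelianize s) \<subseteq> K"
    and "0 \<in> K" and "\<And>a b. a \<in> K \<Longrightarrow> b \<in> K \<Longrightarrow> a + b \<in> K"
    and "u \<in> gen_lift q S"
  shows "Poly_Mapping.keys (abelianize u) \<subseteq> K"
proof -
  obtain s j where "u = s + j" "s \<in> subalg_gen S" "j \<in> AW_ideal q"
    using \<open>u \<in> gen_lift q S\<close> unfolding gen_lift_def by blast
  moreover from \<open>j \<in> AW_ideal q\<close> have "abelianize j = 0"
    using abelianize_comm_ideal_lift AW_ideal_subset_comm_ideal_lift by blast
  ultimately show ?thesis using keys_abelianize_subalg_gen[OF assms(1-3)] by (simp add: abelianize_add)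
qed

lemma subalg_gen_subset_gen_lift: "u \<in> subalg_gen S \<Longrightarrow> u \<in> gen_lift q S"
  unfolding gen_lift_def by (intro CollectI exI[of _ u] exI[of _ 0]) simp

lemma is_subalg_gen_lift: "is_subalg (gen_lift q S)"
proof -
  have "x + y \<in> gen_lift q S \<and> x * y \<in> gen_lift q S \<and> sc c x \<in> gen_lift q S"
    if xy: "x \<in> gen_lift q S" "y \<in> gen_lift q S" for x y c
  proof -
    obtain u j u' j' where uj: "x = u + j" "y = u' + j'" "u \<in> subalg_gen S" "u' \<in> subalg_gen S"
      "j \<in> AW_ideal q" "j' \<in> AW_ideal q"
      using xy unfolding gen_lift_def by blast
    then have "x + y = (u + u') + (j + j')" "x * y = u * u' + (u * j' + j * u' + j * j')"
      "sc c x = sc c u + sc c j"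
      by (simp_all add: algebra_simps)
    moreover have "u + u' \<in> subalg_gen S" "u * u' \<in> subalg_gen S" "sc c u \<in> subalg_gen S"
      using uj by (auto intro: subalg_gen.intros)
    moreover have "j + j' \<in> AW_ideal q" "u * j' + j * u' + j * j' \<in> AW_ideal q" "sc c j \<in> AW_ideal q"
      using uj by auto
    ultimately show ?thesis unfolding gen_lift_def by blast
  qed
  moreover have "1 \<in> gen_lift q S"
    by (rule subalg_gen_subset_gen_lift) (rule subalg_gen.one)
  ultimately show ?thesis unfolding is_subalg_def by blast
qed

lemma is_subalg_Int: "is_subalg U \<Longrightarrow> is_subalg V \<Longrightarrow> is_subalg (U \<inter> V)"
  unfolding is_subalg_def by blast

lemma is_subalg_UNIV: "is_subalg UNIV"
  unfolding is_subalg_def by blast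

lemma power_in_gen_lift: "g \<in> S \<Longrightarrow> g ^ n \<in> gen_lift q S"
  by (intro subalg_gen_subset_gen_lift subalg_gen_power subalg_gen.gen)

lemma mult_in_gen_lift: "x \<in> gen_lift q S \<Longrightarrow> y \<in> gen_lift q S \<Longrightarrow> x * y \<in> gen_lift q S"
  using is_subalg_gen_lift unfolding is_subalg_def by blast

lemma keys_abelianize_AB:
  "u \<in> gen_lift q {gA, gB} \<Longrightarrow> Poly_Mapping.keys (abelianize u) \<subseteq> {(i, j, k). k = 0}"
  by (erule keys_abelianize_gen_lift[rotated 3]) (auto simp: abelianize_generators zero_prod_def)

lemma keys_abelianize_BC:
  "u \<in> gen_lift q {gB, gC} \<Longrightarrow> Poly_Mapping.keys (abelianize u) \<subseteq> {(i, j, k). i = 0}"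
  by (erule keys_abelianize_gen_lift[rotated 3]) (auto simp: abelianize_generators zero_prod_def)

lemma keys_abelianize_AC:
  "u \<in> gen_lift q {gA, gC} \<Longrightarrow> Poly_Mapping.keys (abelianize u) \<subseteq> {(i, j, k). j = 0}"
  by (erule keys_abelianize_gen_lift[rotated 3]) (auto simp: abelianize_generators zero_prod_def)

lemma complement_basis_AB:
  "complement_basis (comm_ideal_lift q) (gen_lift q {gA, gB}) UNIV (\<lambda>(i, j). gA ^ i * gB ^ j)"
  by (rule complement_basis_monomials[where emb = "\<lambda>(i, j). (i, j, 0)"])
    (auto simp: inj_def monomial_ABC_def image_iff intro!: mult_in_gen_lift power_in_gen_lift dest!: keys_abelianize_AB)

lemma complement_basis_ABC:
  "complement_basis (comm_ideal_lift q) UNIV UNIV (\<lambda>(i, j, k). gA ^ i * gB ^ j * gC ^ k)"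
  by (rule complement_basis_monomials[where emb = id]) (auto simp: monomial_ABC_def)

lemma complement_basis_BC:
  "complement_basis (comm_ideal_lift q) (gen_lift q {gB, gC}) UNIV (\<lambda>(j, k). gB ^ j * gC ^ k)"
  by (rule complement_basis_monomials[where emb = "\<lambda>(j, k). (0, j, k)"])
    (auto simp: inj_def monomial_ABC_def image_iff intro!: mult_in_gen_lift power_in_gen_lift dest!: keys_abelianize_BC)

lemma complement_basis_AC:
  "complement_basis (comm_ideal_lift q) (gen_lift q {gA, gC}) UNIV (\<lambda>(i, k). gA ^ i * gC ^ k)"
  by (rule complement_basis_monomials[where emb = "\<lambda>(i, k). (i, 0, k)"])
    (auto simp: inj_def monomial_ABC_def image_iff intro!: mult_in_gen_lift power_in_gen_lift dest!: keys_abelianize_AC)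

lemma complement_basis_A:
  "complement_basis (comm_ideal_lift q) (gen_lift q {gA, gB} \<inter> gen_lift q {gA, gC}) UNIV (\<lambda>i. gA ^ i)"
  by (rule complement_basis_monomials[where emb = "\<lambda>i. (i, 0, 0)"])
    (auto simp: inj_def monomial_ABC_def intro!: power_in_gen_lift dest!: keys_abelianize_AB keys_abelianize_AC)

lemma complement_basis_B:
  "complement_basis (comm_ideal_lift q) (gen_lift q {gA, gB} \<inter> gen_lift q {gB, gC}) UNIV (\<lambda>j. gB ^ j)"
  by (rule complement_basis_monomials[where emb = "\<lambda>j. (0, j, 0)"])
    (auto simp: inj_def monomial_ABC_def intro!: power_in_gen_lift dest!: keys_abelianize_AB keys_abelianize_BC)

lemma complement_basis_C:
  "complement_basis (comm_ideal_lift q) (gen_lift q {gA, gC} \<inter> gen_lift q {gB, gC}) UNIV (\<lambda>k. gC ^ k)"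
  by (rule complement_basis_monomials[where emb = "\<lambda>k. (0, 0, k)"])
    (auto simp: inj_def monomial_ABC_def intro!: power_in_gen_lift dest!: keys_abelianize_AC keys_abelianize_BC)

lemma complement_basis_scalars:
  "complement_basis (comm_ideal_lift q) (gen_lift q {gA, gB} \<inter> gen_lift q {gB, gC} \<inter> gen_lift q {gA, gC})
    (UNIV :: unit set) (\<lambda>_. 1)"
  by (rule complement_basis_monomials[where emb = "\<lambda>_. (0, 0, 0)"])
    (auto simp: inj_def monomial_ABC_def intro!: power_in_gen_lift[where n = 0, simplified]
      dest!: keys_abelianize_AB keys_abelianize_BC keys_abelianize_AC)

theorem proposition11p16:
  fixes q :: "'k::field"
  assumes "q \<noteq> 0" and "q ^ 4 \<noteq> 1"
  defines "I \<equiv> comm_ideal_lift q"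
      and "AB \<equiv> gen_lift q {gA, gB}"
      and "BC \<equiv> gen_lift q {gB, gC}"
      and "AC \<equiv> gen_lift q {gA, gC}"
  shows "(is_subalg (UNIV :: 'k free_alg set) \<and> I \<subseteq> UNIV \<and> complement_basis I UNIV (UNIV :: (nat \<times> nat \<times> nat) set) (\<lambda>(i, j, k). gA ^ i * gB ^ j * gC ^ k)) \<and>
    (is_subalg AB \<and> I \<subseteq> AB \<and> complement_basis I AB (UNIV :: (nat \<times> nat) set) (\<lambda>(i, j). gA ^ i * gB ^ j)) \<and>
    (is_subalg BC \<and> I \<subseteq> BC \<and> complement_basis I BC (UNIV :: (nat \<times> nat) set) (\<lambda>(j, k). gB ^ j * gC ^ k)) \<and>
    (is_subalg AC \<and> I \<subseteq> AC \<and> complement_basis I AC (UNIV :: (nat \<times> nat) set) (\<lambda>(i, k). gA ^ i * gC ^ k)) \<and>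
    (is_subalg (AB \<inter> AC) \<and> I \<subseteq> AB \<inter> AC \<and> complement_basis I (AB \<inter> AC) (UNIV :: nat set) (\<lambda>i. gA ^ i)) \<and>
    (is_subalg (AB \<inter> BC) \<and> I \<subseteq> AB \<inter> BC \<and> complement_basis I (AB \<inter> BC) (UNIV :: nat set) (\<lambda>j. gB ^ j)) \<and>
    (is_subalg (AC \<inter> BC) \<and> I \<subseteq> AC \<inter> BC \<and> complement_basis I (AC \<inter> BC) (UNIV :: nat set) (\<lambda>k. gC ^ k)) \<and>
    (is_subalg (AB \<inter> BC \<inter> AC) \<and> I \<subseteq> AB \<inter> BC \<inter> AC \<and> complement_basis I (AB \<inter> BC \<inter> AC) (UNIV :: unit set) (\<lambda>_. 1))"
proof -
  have "I \<subseteq> AB" unfolding I_def AB_def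
    by (rule comm_ideal_lift_subset_gen_lift[where Z = gC and G = "awC q" and G' = "awA q"])
      (auto simp: assms awC_def awA_def)
  moreover have "I \<subseteq> BC" unfolding I_def BC_def
    by (rule comm_ideal_lift_subset_gen_lift[where Z = gA and G = "awA q" and G' = "awB q"])
      (auto simp: assms awA_def awB_def)
  moreover have "I \<subseteq> AC" unfolding I_def AC_def insert_commute[of gA]
    by (rule comm_ideal_lift_subset_gen_lift[where Z = gB and G = "awB q" and G' = "awC q"])
      (auto simp: assms awB_def awC_def)
  moreover have "is_subalg AB" "is_subalg BC" "is_subalg AC"
    unfolding AB_def BC_def AC_def by (rule is_subalg_gen_lift)+
  ultimately show ?thesis
    unfolding I_def AB_def BC_def AC_def
    using complement_basis_ABC complement_basis_AB complement_basis_BC complement_basis_AC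
      complement_basis_A complement_basis_B complement_basis_C complement_basis_scalars
      is_subalg_UNIV
    by (auto intro: is_subalg_Int)
qed

end
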